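(* In an ordinal setting with indifference classes, let $f:\Sigma\to O$ be a social choice function. (i) If $f$ is pseudomonotone, then for every $\varepsilon>0$ there is a lex-truthful randomized mechanism that $\varepsilon$-implements $f$. (ii) Conversely, if for some $\varepsilon<\frac12$ there is a lex-truthful randomized mechanism that $\varepsilon$-implements $f$, then $f$ is pseudomonotone.
   Context: Setting: a set $N$ of $n$ agents and a finite set $O$ of outcomes. For each agent $j$ there is a fixed partition of $O$ into indifference classes $O^j_1,\dots,O^j_{m_j}$; each allowed preference $\succeq_j\in\Sigma_j$ is a strict total order on these classes, and $\Sigma=\prod_j\Sigma_j$. For $o\in O$, $\mathrm{pos}_{\succeq_j}(o)\in[m_j]$ is the rank under $\succeq_j$ of the class containing $o$; $o\succeq_j o'$ iff $\mathrm{pos}_{\succeq_j}(o)\le\mathrm{pos}_{\succeq_j}(o')$ and $o\succ_j o'$ iff $\mathrm{pos}_{\succeq_j}(o)<\mathrm{pos}_{\succeq_j}(o')$. A social choice function is a map $f:\Sigma\to O$. $f$ is pseudomonotone if for every agent $j$, every $\succeq_{-j}$, and all $\succeq_j,\succeq'_j\in\Sigma_j$, with $o=f(\succeq_j,\succeq_{-j})$, $o'=f(\succeq'_j,\succeq_{-j})$: either $o\succeq_j o'$, or there is $o''$ with $o''\succ_j o'$ and $\mathrm{pos}_{\succeq_j}(o'')<\mathrm{pos}_{\succeq'_j}(o'')$. A randomized mechanism maps profiles to distributions over $O$ and $\varepsilon$-implements $f$ if $\Pr[\mathcal{M}(\succeq)=f(\succeq)]\ge1-\varepsilon$ for every profile.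 For a lottery $p$ and $S\subseteq O$ let $p(S)=\sum_{o\in S}p(o)$. Given $\succeq_j$ and lotteries $p,q$, $p$ lex-dominates $q$ w.r.t. $\succeq_j$ if there is $r\in[m_j]$ such that, listing $j$'s classes in the order of $\succeq_j$, $p$ gives strictly more total probability than $q$ to the $r$-th class and the same total probability to each of the first $r-1$ classes. $\mathcal{M}$ is lex-truthful if for all $j$, all profiles $\succeq$ and all $\succeq'_j\in\Sigma_j$, either $\mathcal{M}(\succeq)$ and $\mathcal{M}(\succeq'_j,\succeq_{-j})$ assign the same total probability to each class $O^j_r$, or $\mathcal{M}(\succeq)$ lex-dominates $\mathcal{M}(\succeq'_j,\succeq_{-j})$ w.r.t. $\succeq_j$. *)

theory Defs
  imports "HOL-Probability.Probability" "HOL-Combinatorics.Permutations"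
begin

text \<open>
  For agent j, the indifference classes are indexed by {..<m j}: outcome o lies in
  class number cls j o.  A preference of agent j is a bijection sigma of {..<m j}
  (a permutation, identity outside) assigning to each class its rank; rank 0 is the
  best class.
\<close>

definition valid_setting :: "('a \<Rightarrow> nat) \<Rightarrow> ('a \<Rightarrow> 'o \<Rightarrow> nat) \<Rightarrow> ('a \<Rightarrow> (nat \<Rightarrow> nat) set) \<Rightarrow> bool" where
  "valid_setting m cls Sig \<longleftrightarrow>
     (\<forall>j. range (cls j) = {..<m j}) \<and> (\<forall>j. \<forall>\<sigma>\<in>Sig j. \<sigma> permutes {..<m j})"

definition profiles :: "('a \<Rightarrow> (nat \<Rightarrow> nat) set) \<Rightarrow> ('a \<Rightarrow> nat \<Rightarrow> nat) set" where
  "profiles Sig = {P. \<forall>j. P j \<in> Sig j}"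

definition pos :: "('a \<Rightarrow> 'o \<Rightarrow> nat) \<Rightarrow> 'a \<Rightarrow> (nat \<Rightarrow> nat) \<Rightarrow> 'o \<Rightarrow> nat" where
  "pos cls j \<sigma> x = \<sigma> (cls j x)"

definition pseudomonotone ::
  "('a \<Rightarrow> 'o \<Rightarrow> nat) \<Rightarrow> ('a \<Rightarrow> (nat \<Rightarrow> nat) set) \<Rightarrow> (('a \<Rightarrow> nat \<Rightarrow> nat) \<Rightarrow> 'o) \<Rightarrow> bool" where
  "pseudomonotone cls Sig f \<longleftrightarrow>
     (\<forall>j. \<forall>P\<in>profiles Sig. \<forall>\<sigma>'\<in>Sig j.
        let o1 = f P; o2 = f (P(j := \<sigma>')) in
        pos cls j (P j) o1 \<le> pos cls j (P j) o2 \<or>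
        (\<exists>o3. pos cls j (P j) o3 < pos cls j (P j) o2 \<and> pos cls j (P j) o3 < pos cls j \<sigma>' o3))"

abbreviation lprob :: "'o pmf \<Rightarrow> 'o set \<Rightarrow> real" where
  "lprob p S \<equiv> measure_pmf.prob p S"

definition lex_dominates ::
  "('a \<Rightarrow> nat) \<Rightarrow> ('a \<Rightarrow> 'o \<Rightarrow> nat) \<Rightarrow> 'a \<Rightarrow> (nat \<Rightarrow> nat) \<Rightarrow> 'o pmf \<Rightarrow> 'o pmf \<Rightarrow> bool" where
  "lex_dominates m cls j \<sigma> p q \<longleftrightarrow>
     (\<exists>r<m j. lprob p {x. pos cls j \<sigma> x = r} > lprob q {x. pos cls j \<sigma> x = r} \<and>
        (\<forall>r'<r. lprob p {x. pos cls j \<sigma> x = r'} = lprob q {x. pos cls j \<sigma> x = r'}))"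

definition lex_truthful ::
  "('a \<Rightarrow> nat) \<Rightarrow> ('a \<Rightarrow> 'o \<Rightarrow> nat) \<Rightarrow> ('a \<Rightarrow> (nat \<Rightarrow> nat) set) \<Rightarrow> (('a \<Rightarrow> nat \<Rightarrow> nat) \<Rightarrow> 'o pmf) \<Rightarrow> bool" where
  "lex_truthful m cls Sig M \<longleftrightarrow>
     (\<forall>j. \<forall>P\<in>profiles Sig. \<forall>\<sigma>'\<in>Sig j.
        (\<forall>r<m j. lprob (M P) {x. cls j x = r} = lprob (M (P(j := \<sigma>'))) {x. cls j x = r}) \<or>
        lex_dominates m cls j (P j) (M P) (M (P(j := \<sigma>'))))"

definition eps_implements ::
  "('a \<Rightarrow> (nat \<Rightarrow> nat) set) \<Rightarrow> real \<Rightarrow> (('a \<Rightarrow> nat \<Rightarrow> nat) \<Rightarrow> 'o pmf) \<Rightarrow> (('a \<Rightarrow> nat \<Rightarrow> nat) \<Rightarrow> 'o) \<Rightarrow> bool" where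
  "eps_implements Sig \<epsilon> M f \<longleftrightarrow> (\<forall>P\<in>profiles Sig. lprob (M P) {f P} \<ge> 1 - \<epsilon>)"

end

theory Submission
  imports Defs
begin

text \<open>
  Necessity: suppose \<open>M\<close> is lex-truthful and puts more than \<open>1/2\<close> on \<open>f\<close>, and agent \<open>j\<close> with
  true preference \<open>\<sigma>\<close> strictly prefers \<open>f P'\<close> to \<open>f P\<close>, where \<open>P' = P(j := \<sigma>')\<close>, while \<open>\<sigma>'\<close>
  demotes none of the classes \<open>\<sigma>\<close> ranks above \<open>f P'\<close>. Then \<open>\<sigma>\<close> and \<open>\<sigma>'\<close> coincide on these top
  classes, and the class of \<open>f P'\<close> gets more mass under \<open>M P'\<close> than under \<open>M P\<close>; so the first class
  where the two lotteries differ lies among the top classes and is the same for \<open>\<sigma>\<close> and \<open>\<sigma>'\<close>,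
  which contradicts that \<open>M P\<close> \<open>\<sigma>\<close>-lex-dominates \<open>M P'\<close> and \<open>M P'\<close> \<open>\<sigma>'\<close>-lex-dominates \<open>M P\<close>.

  Sufficiency: with probability \<open>1 - \<epsilon>\<close> output \<open>f P\<close>; otherwise pick an agent \<open>i\<close> uniformly
  and a class of \<open>i\<close> with probability strictly decreasing in its reported rank. When \<open>j\<close>
  misreports, the lotteries differ only at the classes of the two outcomes and at classes whose
  rank changed, and the first class (in \<open>j\<close>'s true order) whose rank changes is demoted, so it
  loses weight. Pseudomonotonicity places the truthful outcome's class or that first demoted
  class above the class of the misreport's outcome; as the \<open>\<epsilon>\<close>-part is too small to outweigh a
  change of outcome, the first class where the lotteries differ gains weight under truth-telling.
\<close>

section \<open>Permutations of ranks\<close>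

lemma inj_fixes_initial_segment_if_decreasing:
  fixes \<tau> :: "nat \<Rightarrow> nat"
  assumes inj: "inj \<tau>" and decr: "\<forall>r<K. \<tau> r \<le> r" and "r < K"
  shows "\<tau> r = r"
  using \<open>r < K\<close>
proof (induction r rule: less_induct)
  case (less r)
  show ?case
  proof (rule ccontr)
    assume "\<tau> r \<noteq> r"
    with less.prems decr have "\<tau> r < r" by fastforce
    with less.IH less.prems have "\<tau> (\<tau> r) = \<tau> r" by simp
    with inj have "\<tau> r = r" by (rule injD)
    with \<open>\<tau> r \<noteq> r\<close> show False ..
  qed
qed

lemma permutes_agree_on_top_ranks:
  fixes \<sigma> \<sigma>' :: "nat \<Rightarrow> nat"
  assumes \<sigma>: "\<sigma> permutes S" and \<sigma>': "\<sigma>' permutes S"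
    and promoted: "\<forall>c\<in>S. \<sigma> c < K \<longrightarrow> \<sigma>' c \<le> \<sigma> c"
    and top: "\<sigma> c < K \<or> \<sigma>' c < K"
  shows "\<sigma>' c = \<sigma> c"
proof -
  define \<tau> where "\<tau> = \<sigma>' \<circ> inv \<sigma>"
  have "inj \<tau>"
    unfolding \<tau>_def using permutes_inj[OF \<sigma>'] permutes_inj[OF permutes_inv[OF \<sigma>]]
    by (rule inj_compose)
  moreover have "\<forall>r<K. \<tau> r \<le> r"
  proof (intro allI impI)
    fix r assume "r < K"
    show "\<tau> r \<le> r"
    proof (cases "inv \<sigma> r \<in> S")
      case True
      moreover have "\<sigma> (inv \<sigma> r) = r" by (rule permutes_inverses(1)[OF \<sigma>])
      ultimately show ?thesis
        unfolding \<tau>_def using promoted \<open>r < K\<close> by fastforce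
    next
      case False
      then show ?thesis
        unfolding \<tau>_def using permutes_not_in[OF \<sigma>] permutes_not_in[OF \<sigma>']
        by (metis comp_apply order.refl permutes_inverses(1)[OF \<sigma>])
    qed
  qed
  ultimately have fixed: "\<tau> r = r" if "r < K" for r
    using that by (rule inj_fixes_initial_segment_if_decreasing)
  have \<tau>_\<sigma>: "\<tau> (\<sigma> c) = \<sigma>' c"
    unfolding \<tau>_def by (simp add: permutes_inverses(2)[OF \<sigma>])
  from top show ?thesis
  proof
    assume "\<sigma>' c < K"
    then have "\<tau> (\<sigma>' c) = \<tau> (\<sigma> c)" using fixed \<tau>_\<sigma> by simp
    with \<open>inj \<tau>\<close> show ?thesis by (rule injD)
  qed (use fixed \<tau>_\<sigma> in simp)
qed

lemma permutes_first_difference_demoted: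
  fixes \<sigma> \<sigma>' :: "nat \<Rightarrow> nat"
  assumes \<sigma>: "\<sigma> permutes S" and \<sigma>': "\<sigma>' permutes S"
    and above: "\<forall>e. \<sigma> e < \<sigma> c \<longrightarrow> \<sigma>' e = \<sigma> e" and "\<sigma>' c \<noteq> \<sigma> c"
  shows "\<sigma> c < \<sigma>' c"
proof (rule ccontr)
  assume "\<not> \<sigma> c < \<sigma>' c"
  have "\<forall>e\<in>S. \<sigma> e < Suc (\<sigma> c) \<longrightarrow> \<sigma>' e \<le> \<sigma> e"
  proof (intro ballI impI)
    fix e assume "\<sigma> e < Suc (\<sigma> c)"
    then consider "\<sigma> e < \<sigma> c" | "e = c"
      using injD[OF permutes_inj[OF \<sigma>]] by fastforce
    then show "\<sigma>' e \<le> \<sigma> e"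
      by cases (use above \<open>\<not> \<sigma> c < \<sigma>' c\<close> in auto)
  qed
  then have "\<sigma>' c = \<sigma> c"
    using permutes_agree_on_top_ranks[OF \<sigma> \<sigma>'] by blast
  with \<open>\<sigma>' c \<noteq> \<sigma> c\<close> show False ..
qed

lemma permutes_lessThan_rank:
  assumes \<sigma>: "\<sigma> permutes {..<n}"
  shows "r < n \<longleftrightarrow> (\<exists>c<n. r = \<sigma> c)"
proof
  assume "r < n"
  then have "inv \<sigma> r < n" using permutes_in_image[OF permutes_inv[OF \<sigma>]] by simp
  then show "\<exists>c<n. r = \<sigma> c" using permutes_inverses(1)[OF \<sigma>] by metis
qed (use permutes_in_image[OF \<sigma>] in auto)

lemma permutes_lessThan_ex_iff:
  assumes "\<sigma> permutes {..<n}"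
  shows "(\<exists>r<n. Q r) \<longleftrightarrow> (\<exists>c<n. Q (\<sigma> c))"
proof
  assume "\<exists>r<n. Q r"
  then obtain r where "r < n" "Q r" by blast
  moreover obtain c where "c < n" "r = \<sigma> c"
    using permutes_lessThan_rank[OF assms] \<open>r < n\<close> by blast
  ultimately show "\<exists>c<n. Q (\<sigma> c)" by blast
next
  assume "\<exists>c<n. Q (\<sigma> c)"
  then obtain c where "c < n" "Q (\<sigma> c)" by blast
  moreover have "\<sigma> c < n" using permutes_lessThan_rank[OF assms] \<open>c < n\<close> by blast
  ultimately show "\<exists>r<n. Q r" by blast
qed

section \<open>Lexicographic dominance in terms of class probabilities\<close>

abbreviation class_prob :: "'o pmf \<Rightarrow> ('o \<Rightarrow> nat) \<Rightarrow> nat \<Rightarrow> real" where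
  "class_prob p C c \<equiv> lprob p {x. C x = c}"

lemma valid_setting_cls_less: "valid_setting m cls Sig \<Longrightarrow> cls j x < m j"
  unfolding valid_setting_def by blast

lemma valid_setting_class_exists: "valid_setting m cls Sig \<Longrightarrow> c < m j \<Longrightarrow> \<exists>x. cls j x = c"
  unfolding valid_setting_def by (metis imageE lessThan_iff)

lemma valid_setting_permutes: "valid_setting m cls Sig \<Longrightarrow> \<sigma> \<in> Sig j \<Longrightarrow> \<sigma> permutes {..<m j}"
  unfolding valid_setting_def by blast

lemma profiles_update: "P \<in> profiles Sig \<Longrightarrow> \<sigma> \<in> Sig j \<Longrightarrow> P(j := \<sigma>) \<in> profiles Sig"
  unfolding profiles_def by simp

lemma profiles_memD: "P \<in> profiles Sig \<Longrightarrow> P j \<in> Sig j"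
  unfolding profiles_def by simp

lemma rank_set_eq_class:
  "\<sigma> permutes S \<Longrightarrow> {x. pos cls j \<sigma> x = \<sigma> c} = {x. cls j x = c}"
  unfolding pos_def by (simp add: inj_eq permutes_inj)

lemma lex_dominates_iff_class_prob:
  assumes \<sigma>: "\<sigma> permutes {..<m j}"
  shows "lex_dominates m cls j \<sigma> p q \<longleftrightarrow>
    (\<exists>c<m j. class_prob p (cls j) c > class_prob q (cls j) c \<and>
       (\<forall>d<m j. \<sigma> d < \<sigma> c \<longrightarrow> class_prob p (cls j) d = class_prob q (cls j) d))"
proof -
  let ?rank_prob = "\<lambda>p r. lprob p {x. pos cls j \<sigma> x = r}"
  have below: "(\<forall>r'<\<sigma> c. ?rank_prob p r' = ?rank_prob q r') \<longleftrightarrow>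
      (\<forall>d<m j. \<sigma> d < \<sigma> c \<longrightarrow> ?rank_prob p (\<sigma> d) = ?rank_prob q (\<sigma> d))" if "c < m j" for c
  proof (intro iffI allI impI)
    fix r' assume "\<forall>d<m j. \<sigma> d < \<sigma> c \<longrightarrow> ?rank_prob p (\<sigma> d) = ?rank_prob q (\<sigma> d)"
      and "r' < \<sigma> c"
    moreover have "\<sigma> c < m j" using that permutes_lessThan_rank[OF \<sigma>] by blast
    ultimately show "?rank_prob p r' = ?rank_prob q r'"
      using permutes_lessThan_rank[OF \<sigma>, of r'] by force
  qed simp
  have "lex_dominates m cls j \<sigma> p q \<longleftrightarrow>
    (\<exists>c<m j. ?rank_prob p (\<sigma> c) > ?rank_prob q (\<sigma> c) \<and>
       (\<forall>r'<\<sigma> c. ?rank_prob p r' = ?rank_prob q r'))"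
    unfolding lex_dominates_def by (rule permutes_lessThan_ex_iff[OF \<sigma>])
  also have "\<dots> \<longleftrightarrow> (\<exists>c<m j. ?rank_prob p (\<sigma> c) > ?rank_prob q (\<sigma> c) \<and>
       (\<forall>d<m j. \<sigma> d < \<sigma> c \<longrightarrow> ?rank_prob p (\<sigma> d) = ?rank_prob q (\<sigma> d)))"
    using below by blast
  finally show ?thesis by (simp only: rank_set_eq_class[OF \<sigma>])
qed

lemma lex_dominance_not_mutual:
  fixes a b :: "nat \<Rightarrow> real" and \<sigma> \<sigma>' :: "nat \<Rightarrow> nat"
  assumes \<sigma>: "\<sigma> permutes {..<m}" and \<sigma>': "\<sigma>' permutes {..<m}"
    and promoted: "\<forall>c\<in>{..<m}. \<sigma> c < \<sigma> k \<longrightarrow> \<sigma>' c \<le> \<sigma> c"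
    and "k < m" and "a k < b k"
    and dom: "c < m" "a c > b c" "\<forall>d<m. \<sigma> d < \<sigma> c \<longrightarrow> a d = b d"
    and dom': "d < m" "b d > a d" "\<forall>e<m. \<sigma>' e < \<sigma>' d \<longrightarrow> b e = a e"
  shows False
proof -
  have "\<sigma> c \<noteq> \<sigma> k"
    using injD[OF permutes_inj[OF \<sigma>]] dom(2) \<open>a k < b k\<close> by force
  moreover have "\<not> \<sigma> k < \<sigma> c"
    using dom(3) \<open>k < m\<close> \<open>a k < b k\<close> by force
  ultimately have "\<sigma> c < \<sigma> k" by simp
  then have c_kept: "\<sigma>' c = \<sigma> c"
    using permutes_agree_on_top_ranks[OF \<sigma> \<sigma>' promoted] by blast
  have "\<not> \<sigma> d < \<sigma> c"
    using dom(3) dom'(1,2) by force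
  moreover have "\<not> \<sigma>' d < \<sigma> c"
    using permutes_agree_on_top_ranks[OF \<sigma> \<sigma>' promoted, of d] \<open>\<sigma> c < \<sigma> k\<close> \<open>\<not> \<sigma> d < \<sigma> c\<close>
    by fastforce
  moreover have "\<sigma>' d \<noteq> \<sigma>' c"
    using injD[OF permutes_inj[OF \<sigma>']] dom(2) dom'(2) by force
  ultimately have "\<sigma>' c < \<sigma>' d" using c_kept by simp
  then show False using dom'(3) dom(1,2) by force
qed

lemma lex_positive_shift:
  fixes D w :: "nat \<Rightarrow> real" and \<sigma> \<sigma>' :: "nat \<Rightarrow> nat"
  assumes \<sigma>: "\<sigma> permutes {..<m}" and \<sigma>': "\<sigma>' permutes {..<m}" and "\<sigma>' \<noteq> \<sigma>"
    and "a < m" and "b < m"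
    and pm: "\<sigma> a \<le> \<sigma> b \<or> (\<exists>c. \<sigma> c < \<sigma> b \<and> \<sigma> c < \<sigma>' c)"
    and D: "\<And>c. c < m \<Longrightarrow> D c = \<alpha> * ((if a = c then 1 else 0) - (if b = c then 1 else 0))
                       + \<beta> * (w (\<sigma> c) - w (\<sigma>' c))"
    and "0 < \<beta>" and bound: "\<And>s t. \<beta> * \<bar>w s - w t\<bar> < \<alpha>"
    and w_decr: "\<And>s t. s < t \<Longrightarrow> t < m \<Longrightarrow> w t < w s"
  shows "\<exists>c<m. D c > 0 \<and> (\<forall>e<m. \<sigma> e < \<sigma> c \<longrightarrow> D e = 0)"
proof -
  obtain k where "\<sigma>' k \<noteq> \<sigma> k" using \<open>\<sigma>' \<noteq> \<sigma>\<close> by blast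
  then obtain c0 where "\<sigma>' c0 \<noteq> \<sigma> c0" and first: "\<And>e. \<sigma>' e \<noteq> \<sigma> e \<Longrightarrow> \<sigma> c0 \<le> \<sigma> e"
    using ex_has_least_nat[of "\<lambda>c. \<sigma>' c \<noteq> \<sigma> c" k \<sigma>] by blast
  have "c0 < m"
    using \<open>\<sigma>' c0 \<noteq> \<sigma> c0\<close> permutes_not_in[OF \<sigma>] permutes_not_in[OF \<sigma>'] by fastforce
  have kept: "\<sigma>' e = \<sigma> e" if "\<sigma> e < \<sigma> c0" for e
    using first[of e] that by fastforce
  then have "\<sigma> c0 < \<sigma>' c0"
    using permutes_first_difference_demoted[OF \<sigma> \<sigma>'] \<open>\<sigma>' c0 \<noteq> \<sigma> c0\<close> by blast
  moreover have "\<sigma>' c0 < m" using permutes_in_image[OF \<sigma>'] \<open>c0 < m\<close> by simp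
  ultimately have demotion_gain: "0 < w (\<sigma> c0) - w (\<sigma>' c0)"
    using w_decr by fastforce
  show ?thesis
  proof (cases "a = b \<or> (\<sigma> c0 < \<sigma> a \<and> \<sigma> c0 < \<sigma> b)")
    case True
    have "D c0 = \<beta> * (w (\<sigma> c0) - w (\<sigma>' c0))"
      using D \<open>c0 < m\<close> True by auto
    then have "D c0 > 0" using demotion_gain \<open>0 < \<beta>\<close> by simp
    moreover have "D e = 0" if "e < m" "\<sigma> e < \<sigma> c0" for e
    proof -
      have "e \<noteq> a \<or> a = b" "e \<noteq> b \<or> a = b" using that(2) True by auto
      then show ?thesis using D kept[OF that(2)] that(1) by auto
    qed
    ultimately show ?thesis using \<open>c0 < m\<close> by blast
  next
    case False
    have "\<sigma> a < \<sigma> b \<and> \<sigma> a \<le> \<sigma> c0"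
    proof (cases "\<sigma> a \<le> \<sigma> b")
      case True
      then show ?thesis using False injD[OF permutes_inj[OF \<sigma>], of a b] by fastforce
    next
      case not_le: False
      then obtain c where "\<sigma> c < \<sigma> b" "\<sigma> c < \<sigma>' c" using pm by blast
      then have "\<sigma> c0 \<le> \<sigma> c" using first by fastforce
      then show ?thesis using False not_le \<open>\<sigma> c < \<sigma> b\<close> by auto
    qed
    then have "a \<noteq> b" and above_a: "\<And>e. \<sigma> e < \<sigma> a \<Longrightarrow> e \<noteq> a \<and> e \<noteq> b \<and> \<sigma>' e = \<sigma> e"
      using kept by auto
    have "\<beta> * - \<bar>w (\<sigma> a) - w (\<sigma>' a)\<bar> \<le> \<beta> * (w (\<sigma> a) - w (\<sigma>' a))"
      using \<open>0 < \<beta>\<close> by (intro mult_left_mono) auto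
    then have "- \<alpha> < \<beta> * (w (\<sigma> a) - w (\<sigma>' a))"
      using bound[of "\<sigma> a" "\<sigma>' a"] by simp
    then have "D a > 0" using D \<open>a < m\<close> \<open>a \<noteq> b\<close> by simp
    moreover have "D e = 0" if "e < m" "\<sigma> e < \<sigma> a" for e
      using D above_a[OF that(2)] that(1) by simp
    ultimately show ?thesis using \<open>a < m\<close> by blast
  qed
qed

section \<open>Lex-truthful implementation forces pseudomonotonicity\<close>

lemma class_prob_ge_prob_singleton: "lprob p {y} \<le> class_prob p C (C y)"
  by (intro measure_pmf.finite_measure_mono) auto

lemma class_prob_less_half:
  assumes "class_prob p C c > 1/2" and "c' \<noteq> c"
  shows "class_prob p C c' < 1/2"
proof -
  have "class_prob p C c' + class_prob p C c = lprob p ({x. C x = c'} \<union> {x. C x = c})"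
    using \<open>c' \<noteq> c\<close> by (subst measure_pmf.finite_measure_Union) auto
  also have "\<dots> \<le> 1" by simp
  finally show ?thesis using assms(1) by simp
qed

lemma class_prob_outcome_gt_half:
  assumes "eps_implements Sig \<epsilon> M f" and "\<epsilon> < 1/2" and "P \<in> profiles Sig"
  shows "class_prob (M P) C (C (f P)) > 1/2"
  using assms class_prob_ge_prob_singleton[of "M P" "f P" C]
  unfolding eps_implements_def by force

lemma lex_truthful_class_dominance:
  assumes v: "valid_setting m cls Sig" and truthful: "lex_truthful m cls Sig M"
    and P: "P \<in> profiles Sig" and \<sigma>': "\<sigma>' \<in> Sig j"
    and "k < m j" and "class_prob (M P) (cls j) k \<noteq> class_prob (M (P(j := \<sigma>'))) (cls j) k"
  obtains c where "c < m j"
    "class_prob (M P) (cls j) c > class_prob (M (P(j := \<sigma>'))) (cls j) c"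
    "\<forall>d<m j. P j d < P j c \<longrightarrow> class_prob (M P) (cls j) d = class_prob (M (P(j := \<sigma>'))) (cls j) d"
proof -
  have "lex_dominates m cls j (P j) (M P) (M (P(j := \<sigma>')))"
    using truthful P \<sigma>' assms(5,6) unfolding lex_truthful_def by blast
  then show ?thesis
    using that lex_dominates_iff_class_prob[where m=m and j=j, OF valid_setting_permutes[OF v profiles_memD[OF P]]]
    by blast
qed

lemma pseudomonotone_if_lex_truthful_implementation:
  assumes v: "valid_setting m cls Sig" and "\<epsilon> < 1/2"
    and truthful: "lex_truthful m cls Sig M" and implements: "eps_implements Sig \<epsilon> M f"
  shows "pseudomonotone cls Sig f"
  unfolding pseudomonotone_def Let_def pos_def
proof (intro allI ballI)
  fix j P \<sigma>' assume P: "P \<in> profiles Sig" and \<sigma>': "\<sigma>' \<in> Sig j"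
  let ?P' = "P(j := \<sigma>')" and ?k = "cls j (f (P(j := \<sigma>')))"
  have P': "?P' \<in> profiles Sig" using P \<sigma>' by (rule profiles_update)
  have \<sigma>: "P j \<in> Sig j" using P by (rule profiles_memD)
  show "P j (cls j (f P)) \<le> P j ?k \<or> (\<exists>o3. P j (cls j o3) < P j ?k \<and> P j (cls j o3) < \<sigma>' (cls j o3))"
  proof (rule ccontr)
    assume "\<not> ?thesis"
    then have worse: "P j ?k < P j (cls j (f P))"
      and "\<And>x. P j (cls j x) < P j ?k \<Longrightarrow> \<sigma>' (cls j x) \<le> P j (cls j x)"
      by auto
    then have promoted: "\<forall>c\<in>{..<m j}. P j c < P j ?k \<longrightarrow> \<sigma>' c \<le> P j c"
      using valid_setting_class_exists[OF v] by blast
    have "class_prob (M P) (cls j) ?k < 1/2"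
      using class_prob_outcome_gt_half[OF implements \<open>\<epsilon> < 1/2\<close> P] worse
      by (intro class_prob_less_half) auto
    moreover have "class_prob (M ?P') (cls j) ?k > 1/2"
      using class_prob_outcome_gt_half[OF implements \<open>\<epsilon> < 1/2\<close> P'] .
    ultimately have k: "class_prob (M P) (cls j) ?k < class_prob (M ?P') (cls j) ?k" by simp
    have "?k < m j" using v by (rule valid_setting_cls_less)
    obtain c where "c < m j" "class_prob (M P) (cls j) c > class_prob (M ?P') (cls j) c"
      "\<forall>d<m j. P j d < P j c \<longrightarrow> class_prob (M P) (cls j) d = class_prob (M ?P') (cls j) d"
      using lex_truthful_class_dominance[OF v truthful P \<sigma>' \<open>?k < m j\<close>] k by auto
    moreover obtain d where "d < m j" "class_prob (M ?P') (cls j) d > class_prob (M P) (cls j) d"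
      "\<forall>e<m j. \<sigma>' e < \<sigma>' d \<longrightarrow> class_prob (M ?P') (cls j) e = class_prob (M P) (cls j) e"
      using lex_truthful_class_dominance[OF v truthful P' \<sigma> \<open>?k < m j\<close>] k by auto
    ultimately show False
      using lex_dominance_not_mutual[where m="m j" and a="class_prob (M P) (cls j)"
          and b="class_prob (M ?P') (cls j)", OF valid_setting_permutes[OF v \<sigma>] valid_setting_permutes[OF v \<sigma>']
          promoted \<open>?k < m j\<close> k]
      by blast
  qed
qed

section \<open>A lex-truthful mechanism for pseudomonotone choice functions\<close>

definition rank_weight :: "nat \<Rightarrow> nat \<Rightarrow> real" where
  "rank_weight n r = real (n - r) / (\<Sum>s<n. real (n - s))"

lemma rank_weight_normalizer_pos: "0 < n \<Longrightarrow> 0 < (\<Sum>s<n. real (n - s))"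
  by (intro sum_pos2[where i=0]) auto

lemma rank_weight_nonneg: "0 \<le> rank_weight n r"
  unfolding rank_weight_def by (intro divide_nonneg_nonneg sum_nonneg) auto

lemma rank_weight_le_one: "rank_weight n r \<le> 1"
proof (cases "n = 0")
  case False
  have "real (n - r) \<le> real (n - 0)" by simp
  also have "\<dots> \<le> (\<Sum>s<n. real (n - s))"
    using False by (intro member_le_sum) auto
  finally show ?thesis
    unfolding rank_weight_def using rank_weight_normalizer_pos[of n] False by simp
qed (simp add: rank_weight_def)

lemma rank_weight_diff_le_one: "\<bar>rank_weight n r - rank_weight n s\<bar> \<le> 1"
  unfolding abs_le_iff
  using rank_weight_nonneg[of n r] rank_weight_nonneg[of n s] rank_weight_le_one[of n r]
    rank_weight_le_one[of n s]
  by linarith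

lemma sum_rank_weight: "0 < n \<Longrightarrow> (\<Sum>r<n. rank_weight n r) = 1"
  unfolding rank_weight_def using rank_weight_normalizer_pos[of n]
  by (simp add: sum_divide_distrib[symmetric])

lemma rank_weight_strict_decreasing: "r < s \<Longrightarrow> s < n \<Longrightarrow> rank_weight n s < rank_weight n r"
  unfolding rank_weight_def using rank_weight_normalizer_pos[of n]
  by (intro divide_strict_right_mono) auto

definition class_rep :: "('a \<Rightarrow> 'o \<Rightarrow> nat) \<Rightarrow> 'a \<Rightarrow> nat \<Rightarrow> 'o" where
  "class_rep cls i c = (SOME x. cls i x = c)"

lemma cls_class_rep:
  assumes "valid_setting m cls Sig" and "c < m i"
  shows "cls i (class_rep cls i c) = c"
  unfolding class_rep_def using valid_setting_class_exists[OF assms] by (rule someI_ex)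

definition rank_lottery :: "('a \<Rightarrow> nat) \<Rightarrow> ('a \<Rightarrow> 'o \<Rightarrow> nat) \<Rightarrow> 'a \<Rightarrow> (nat \<Rightarrow> nat) \<Rightarrow> 'o \<Rightarrow> real" where
  "rank_lottery m cls i \<tau> x =
     (if x = class_rep cls i (cls i x) then rank_weight (m i) (\<tau> (cls i x)) else 0)"

lemma rank_lottery_nonneg: "0 \<le> rank_lottery m cls i \<tau> x"
  unfolding rank_lottery_def using rank_weight_nonneg by simp

lemma sum_rank_lottery_class:
  fixes cls :: "'a \<Rightarrow> 'o::finite \<Rightarrow> nat"
  assumes v: "valid_setting m cls Sig" and "c < m i"
  shows "(\<Sum>x | cls i x = c. rank_lottery m cls i \<tau> x) = rank_weight (m i) (\<tau> c)"
proof -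
  have "(\<Sum>x | cls i x = c. rank_lottery m cls i \<tau> x)
      = (\<Sum>x | cls i x = c. if x = class_rep cls i c then rank_weight (m i) (\<tau> c) else 0)"
    unfolding rank_lottery_def by (rule sum.cong) auto
  also have "\<dots> = rank_weight (m i) (\<tau> c)"
    using cls_class_rep[OF assms] by (simp add: sum.delta')
  finally show ?thesis .
qed

lemma sum_rank_lottery:
  fixes cls :: "'a \<Rightarrow> 'o::finite \<Rightarrow> nat"
  assumes v: "valid_setting m cls Sig" and \<tau>: "\<tau> permutes {..<m i}"
  shows "(\<Sum>x\<in>UNIV. rank_lottery m cls i \<tau> x) = 1"
proof -
  have "(\<Sum>x\<in>UNIV. rank_lottery m cls i \<tau> x) = (\<Sum>c<m i. \<Sum>x | cls i x = c. rank_lottery m cls i \<tau> x)"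
  proof -
    have "cls i ` UNIV \<subseteq> {..<m i}" using valid_setting_cls_less[OF v] by blast
    from sum.group[OF finite finite_lessThan this, of "rank_lottery m cls i \<tau>"] show ?thesis by simp
  qed
  also have "\<dots> = (\<Sum>c<m i. rank_weight (m i) (\<tau> c))"
    by (rule sum.cong) (simp_all add: sum_rank_lottery_class[OF v])
  also have "\<dots> = (\<Sum>r<m i. rank_weight (m i) r)"
    by (simp only: sum.permute[OF \<tau>, of "rank_weight (m i)"] comp_def)
  also have "\<dots> = 1"
    using valid_setting_cls_less[OF v, of i undefined] by (intro sum_rank_weight) simp
  finally show ?thesis .
qed

definition mech_density ::
  "('a::finite \<Rightarrow> nat) \<Rightarrow> ('a \<Rightarrow> 'o \<Rightarrow> nat) \<Rightarrow> (('a \<Rightarrow> nat \<Rightarrow> nat) \<Rightarrow> 'o) \<Rightarrow> real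
     \<Rightarrow> ('a \<Rightarrow> nat \<Rightarrow> nat) \<Rightarrow> 'o \<Rightarrow> real" where
  "mech_density m cls f \<epsilon> P x =
     (1 - \<epsilon>) * (if x = f P then 1 else 0) + \<epsilon> / CARD('a) * (\<Sum>i\<in>UNIV. rank_lottery m cls i (P i) x)"

definition mechanism ::
  "('a::finite \<Rightarrow> nat) \<Rightarrow> ('a \<Rightarrow> 'o \<Rightarrow> nat) \<Rightarrow> (('a \<Rightarrow> nat \<Rightarrow> nat) \<Rightarrow> 'o) \<Rightarrow> real
     \<Rightarrow> ('a \<Rightarrow> nat \<Rightarrow> nat) \<Rightarrow> 'o pmf" where
  "mechanism m cls f \<epsilon> P = embed_pmf (mech_density m cls f \<epsilon> P)"

lemma mech_density_nonneg: "0 \<le> \<epsilon> \<Longrightarrow> \<epsilon> \<le> 1 \<Longrightarrow> 0 \<le> mech_density m cls f \<epsilon> P x"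
  unfolding mech_density_def using rank_lottery_nonneg
  by (intro add_nonneg_nonneg mult_nonneg_nonneg sum_nonneg divide_nonneg_nonneg) auto

lemma sum_mech_density:
  fixes m :: "'a::finite \<Rightarrow> nat" and cls :: "'a \<Rightarrow> 'o::finite \<Rightarrow> nat"
  assumes v: "valid_setting m cls Sig" and P: "P \<in> profiles Sig"
  shows "(\<Sum>x\<in>UNIV. mech_density m cls f \<epsilon> P x) = 1"
proof -
  have "(\<Sum>x\<in>UNIV. \<Sum>i\<in>UNIV. rank_lottery m cls i (P i) x) = (\<Sum>i\<in>(UNIV::'a set). 1)"
    by (subst sum.swap) (intro sum.cong refl sum_rank_lottery[OF v]
        valid_setting_permutes[OF v profiles_memD[OF P]])
  then show ?thesis
    unfolding mech_density_def sum.distrib sum_distrib_left[symmetric] by simp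
qed

lemma prob_mechanism:
  fixes m :: "'a::finite \<Rightarrow> nat" and cls :: "'a \<Rightarrow> 'o::finite \<Rightarrow> nat"
  assumes v: "valid_setting m cls Sig" and P: "P \<in> profiles Sig" and "0 \<le> \<epsilon>" "\<epsilon> \<le> 1"
  shows "lprob (mechanism m cls f \<epsilon> P) S = (\<Sum>x\<in>S. mech_density m cls f \<epsilon> P x)"
proof -
  have nonneg: "\<And>x. 0 \<le> mech_density m cls f \<epsilon> P x"
    using assms(3,4) by (rule mech_density_nonneg)
  have "(\<integral>\<^sup>+x. ennreal (mech_density m cls f \<epsilon> P x) \<partial>count_space UNIV) = 1"
    using sum_mech_density[OF v P] nonneg
    by (simp add: nn_integral_count_space_finite sum_ennreal)
  then show ?thesis
    unfolding mechanism_def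
    by (simp add: measure_measure_pmf_finite pmf_embed_pmf[OF nonneg])
qed

lemma class_prob_mechanism:
  fixes m :: "'a::finite \<Rightarrow> nat" and cls :: "'a \<Rightarrow> 'o::finite \<Rightarrow> nat"
  assumes v: "valid_setting m cls Sig" and P: "P \<in> profiles Sig" and \<epsilon>: "0 \<le> \<epsilon>" "\<epsilon> \<le> 1"
    and c: "c < m j"
  shows "class_prob (mechanism m cls f \<epsilon> P) (cls j) c =
    (1 - \<epsilon>) * (if cls j (f P) = c then 1 else 0)
    + \<epsilon> / CARD('a) * (rank_weight (m j) (P j c)
        + (\<Sum>i\<in>UNIV - {j}. \<Sum>x | cls j x = c. rank_lottery m cls i (P i) x))"
proof -
  have "(\<Sum>x | cls j x = c. \<Sum>i\<in>UNIV. rank_lottery m cls i (P i) x)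
      = (\<Sum>x | cls j x = c. rank_lottery m cls j (P j) x)
        + (\<Sum>i\<in>UNIV - {j}. \<Sum>x | cls j x = c. rank_lottery m cls i (P i) x)"
    by (subst sum.swap) (simp add: sum.remove)
  moreover have "(\<Sum>x | cls j x = c. if x = f P then 1 else 0) = (if cls j (f P) = c then 1 else (0::real))"
    by (simp add: sum.delta')
  ultimately show ?thesis
    unfolding prob_mechanism[OF v P \<epsilon>] mech_density_def sum.distrib sum_distrib_left[symmetric]
    by (simp add: sum_rank_lottery_class[OF v c])
qed

lemma class_prob_mechanism_update:
  fixes m :: "'a::finite \<Rightarrow> nat" and cls :: "'a \<Rightarrow> 'o::finite \<Rightarrow> nat"
  assumes v: "valid_setting m cls Sig" and P: "P \<in> profiles Sig" and \<sigma>': "\<sigma>' \<in> Sig j"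
    and \<epsilon>: "0 \<le> \<epsilon>" "\<epsilon> \<le> 1" and c: "c < m j"
  shows "class_prob (mechanism m cls f \<epsilon> P) (cls j) c
      - class_prob (mechanism m cls f \<epsilon> (P(j := \<sigma>'))) (cls j) c =
    (1 - \<epsilon>) * ((if cls j (f P) = c then 1 else 0) - (if cls j (f (P(j := \<sigma>'))) = c then 1 else 0))
    + \<epsilon> / CARD('a) * (rank_weight (m j) (P j c) - rank_weight (m j) (\<sigma>' c))"
proof -
  have "(\<Sum>i\<in>UNIV - {j}. \<Sum>x | cls j x = c. rank_lottery m cls i ((P(j := \<sigma>')) i) x)
      = (\<Sum>i\<in>UNIV - {j}. \<Sum>x | cls j x = c. rank_lottery m cls i (P i) x)"
    by (intro sum.cong) auto
  then show ?thesis
    unfolding class_prob_mechanism[OF v P \<epsilon> c] class_prob_mechanism[OF v profiles_update[OF P \<sigma>'] \<epsilon> c]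
    by (simp add: algebra_simps)
qed

lemma eps_implements_mechanism:
  fixes m :: "'a::finite \<Rightarrow> nat" and cls :: "'a \<Rightarrow> 'o::finite \<Rightarrow> nat"
  assumes v: "valid_setting m cls Sig" and \<epsilon>: "0 \<le> \<epsilon>" "\<epsilon> \<le> 1"
  shows "eps_implements Sig \<epsilon> (mechanism m cls f \<epsilon>) f"
  unfolding eps_implements_def
proof
  fix P assume P: "P \<in> profiles Sig"
  have "0 \<le> \<epsilon> / CARD('a) * (\<Sum>i\<in>UNIV. rank_lottery m cls i (P i) (f P))"
    using \<epsilon> rank_lottery_nonneg by (intro mult_nonneg_nonneg sum_nonneg divide_nonneg_nonneg) auto
  then show "1 - \<epsilon> \<le> lprob (mechanism m cls f \<epsilon> P) {f P}"
    unfolding prob_mechanism[OF v P \<epsilon>] mech_density_def by simp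
qed

lemma pseudomonotone_class_form:
  assumes "pseudomonotone cls Sig f" and "P \<in> profiles Sig" and "\<sigma>' \<in> Sig j"
  shows "P j (cls j (f P)) \<le> P j (cls j (f (P(j := \<sigma>')))) \<or>
    (\<exists>c. P j c < P j (cls j (f (P(j := \<sigma>')))) \<and> P j c < \<sigma>' c)"
  using assms unfolding pseudomonotone_def Let_def pos_def by blast

lemma lex_truthful_mechanism:
  fixes m :: "'a::finite \<Rightarrow> nat" and cls :: "'a \<Rightarrow> 'o::finite \<Rightarrow> nat"
  assumes v: "valid_setting m cls Sig" and pm: "pseudomonotone cls Sig f"
    and "0 < \<epsilon>" and "\<epsilon> < 1/2"
  shows "lex_truthful m cls Sig (mechanism m cls f \<epsilon>)"
  unfolding lex_truthful_def
proof (intro allI ballI)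
  fix j P \<sigma>' assume P: "P \<in> profiles Sig" and \<sigma>': "\<sigma>' \<in> Sig j"
  let ?M = "mechanism m cls f \<epsilon>" and ?P' = "P(j := \<sigma>')"
  have \<epsilon>: "0 \<le> \<epsilon>" "\<epsilon> \<le> 1" using \<open>0 < \<epsilon>\<close> \<open>\<epsilon> < 1/2\<close> by auto
  have \<sigma>_perm: "P j permutes {..<m j}" and \<sigma>'_perm: "\<sigma>' permutes {..<m j}"
    using valid_setting_permutes[OF v] profiles_memD[OF P] \<sigma>' by auto
  show "(\<forall>r<m j. class_prob (?M P) (cls j) r = class_prob (?M ?P') (cls j) r) \<or>
    lex_dominates m cls j (P j) (?M P) (?M ?P')"
  proof (cases "\<sigma>' = P j")
    case False
    let ?\<beta> = "\<epsilon> / CARD('a)"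
    have "0 < ?\<beta>" using \<open>0 < \<epsilon>\<close> by simp
    have "?\<beta> * \<bar>rank_weight (m j) s - rank_weight (m j) t\<bar> < 1 - \<epsilon>" for s t
    proof -
      have "?\<beta> * \<bar>rank_weight (m j) s - rank_weight (m j) t\<bar> \<le> ?\<beta>"
        using \<open>0 < ?\<beta>\<close> rank_weight_diff_le_one by (intro mult_left_le) auto
      also have "\<dots> \<le> \<epsilon>" using \<open>0 < \<epsilon>\<close> by (simp add: divide_le_eq)
      finally show ?thesis using \<open>\<epsilon> < 1/2\<close> by simp
    qed
    then obtain c where "c < m j"
      "class_prob (?M P) (cls j) c - class_prob (?M ?P') (cls j) c > 0"
      "\<forall>e<m j. P j e < P j c \<longrightarrow> class_prob (?M P) (cls j) e - class_prob (?M ?P') (cls j) e = 0"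
      using lex_positive_shift[where D="\<lambda>c. class_prob (?M P) (cls j) c - class_prob (?M ?P') (cls j) c",
          OF \<sigma>_perm \<sigma>'_perm False valid_setting_cls_less[OF v] valid_setting_cls_less[OF v]
          pseudomonotone_class_form[OF pm P \<sigma>'] class_prob_mechanism_update[OF v P \<sigma>' \<epsilon>]
          \<open>0 < ?\<beta>\<close> _ rank_weight_strict_decreasing]
      by blast
    then have "lex_dominates m cls j (P j) (?M P) (?M ?P')"
      unfolding lex_dominates_iff_class_prob[where m=m and j=j, OF \<sigma>_perm] by auto
    then show ?thesis ..
  qed simp
qed

lemma lex_truthful_implementation_if_pseudomonotone:
  fixes m :: "'a::finite \<Rightarrow> nat" and cls :: "'a \<Rightarrow> 'o::finite \<Rightarrow> nat"
  assumes v: "valid_setting m cls Sig" and pm: "pseudomonotone cls Sig f" and "0 < \<epsilon>"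
  shows "\<exists>M. lex_truthful m cls Sig M \<and> eps_implements Sig \<epsilon> M f"
proof -
  define \<delta> where "\<delta> = min \<epsilon> (1/3)"
  have "0 < \<delta>" "\<delta> < 1/2" "\<delta> \<le> \<epsilon>" using \<open>0 < \<epsilon>\<close> unfolding \<delta>_def by auto
  then have "lex_truthful m cls Sig (mechanism m cls f \<delta>)"
    and "eps_implements Sig \<delta> (mechanism m cls f \<delta>) f"
    using lex_truthful_mechanism[OF v pm] eps_implements_mechanism[OF v] by auto
  moreover have "eps_implements Sig \<epsilon> M f" if "eps_implements Sig \<delta> M f" for M
    using that \<open>\<delta> \<le> \<epsilon>\<close> unfolding eps_implements_def by force
  ultimately show ?thesis by blast
qed

theorem theorem5:
  fixes m :: "'a::finite \<Rightarrow> nat"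
    and cls :: "'a \<Rightarrow> 'o::finite \<Rightarrow> nat"
    and Sig :: "'a \<Rightarrow> (nat \<Rightarrow> nat) set"
    and f :: "('a \<Rightarrow> nat \<Rightarrow> nat) \<Rightarrow> 'o"
  assumes "valid_setting m cls Sig"
  shows "(pseudomonotone cls Sig f \<longrightarrow>
            (\<forall>\<epsilon>>0. \<exists>M. lex_truthful m cls Sig M \<and> eps_implements Sig \<epsilon> M f))
       \<and> ((\<exists>\<epsilon><1/2. \<exists>M. lex_truthful m cls Sig M \<and> eps_implements Sig \<epsilon> M f)
            \<longrightarrow> pseudomonotone cls Sig f)"
  using lex_truthful_implementation_if_pseudomonotone[OF assms]
    pseudomonotone_if_lex_truthful_implementation[OF assms]
  by blast

end
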